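(* Let $I\subseteq R$ be an $\mathfrak m$-primary monomial ideal. The following are equivalent: (1) $I$ is good; (2) for every integer $l\ge 1$ and every monomial $m\in I^l$ there exist $a_1,\dots,a_n\in\mathbb N$ with $m\in B_{a_1,\dots,a_n}$ and $a_1+\dots+a_n\ge l-1$; (3) for every integer $l\ge1$ and all $m_1,\dots,m_l\in G(I)$ there exist $a_1,\dots,a_n\in\mathbb N$ with $m_1\cdots m_l\in B_{a_1,\dots,a_n}$ and $a_1+\dots+a_n\ge l-1$.
   Context: Let $\mathbb K$ be a field, $R=\mathbb K[x_1,\dots,x_n]$, $\mathfrak m=\langle x_1,\dots,x_n\rangle$, $\mathbb N=\{0,1,2,\dots\}$. A monomial $x_1^{\alpha_1}\cdots x_n^{\alpha_n}$ is identified with the point $(\alpha_1,\dots,\alpha_n)\in\mathbb N^n$. For a monomial ideal $I$, $G(I)$ denotes its (unique) minimal monomial generating set. If $I$ is an $\mathfrak m$-primary monomial ideal, then for each $i$ there is a unique $d_i\ge1$ with $x_i^{d_i}\in G(I)$; write $\mu_i=x_i^{d_i}$. For $(a_1,\dots,a_n)\in\mathbb N^n$ the box associated to $I$ is $B_{a_1,\dots,a_n}=([a_1d_1,(a_1+1)d_1]\times\cdots\times[a_nd_n,(a_n+1)d_n])\cap\mathbb N^n$; a monomial belongs to a box if its exponent vector does. $I$ is called good if for every integer $l\ge1$, every element of $G(I^l)$ belongs to some box $B_{a_1,\dots,a_n}$ with $a_1+\dots+a_n=l-1$; otherwise $I$ is called bad. *)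

theory Defs
  imports Main
begin

text \<open>Monomials in variables indexed by the finite type 'n are exponent vectors
  'n \<Rightarrow> nat; the product of monomials is the sum of exponent vectors and
  divisibility is the pointwise order. A monomial ideal is represented by the
  set of monomials it contains (it is the K-span of them), i.e. an upward
  closed set of exponent vectors.\<close>

type_synonym 'n monomial = "'n \<Rightarrow> nat"

definition monomial_ideal :: "'n monomial set \<Rightarrow> bool" where
  "monomial_ideal I \<longleftrightarrow> (\<forall>u v. u \<in> I \<and> u \<le> v \<longrightarrow> v \<in> I)"

definition mon_radical :: "'n monomial set \<Rightarrow> 'n monomial set" where
  "mon_radical I = {u. \<exists>k::nat. k \<ge> 1 \<and> (\<lambda>i. k * u i) \<in> I}"

text \<open>Monomials of the maximal ideal m = (x_1,...,x_n): all nonconstant monomials.\<close>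
definition mon_max :: "'n monomial set" where
  "mon_max = {u. u \<noteq> (\<lambda>_. 0)}"

definition m_primary :: "'n monomial set \<Rightarrow> bool" where
  "m_primary I \<longleftrightarrow> monomial_ideal I \<and> mon_radical I = mon_max"

definition mingens :: "'n monomial set \<Rightarrow> 'n monomial set" where
  "mingens I = {u \<in> I. \<forall>v \<in> I. v \<le> u \<longrightarrow> v = u}"

definition mprod :: "'n monomial list \<Rightarrow> 'n monomial" where
  "mprod ms = (\<lambda>i. sum_list (map (\<lambda>m. m i) ms))"

definition mon_pow :: "'n monomial set \<Rightarrow> nat \<Rightarrow> 'n monomial set" where
  "mon_pow I l = {u. \<exists>ms. length ms = l \<and> set ms \<subseteq> I \<and> mprod ms \<le> u}"

definition xpow :: "'n \<Rightarrow> nat \<Rightarrow> 'n monomial" where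
  "xpow i d = (\<lambda>j. if j = i then d else 0)"

definition pdeg :: "'n monomial set \<Rightarrow> 'n \<Rightarrow> nat" where
  "pdeg I i = (THE d. d \<ge> 1 \<and> xpow i d \<in> mingens I)"

definition in_box :: "'n monomial set \<Rightarrow> 'n monomial \<Rightarrow> 'n monomial \<Rightarrow> bool" where
  "in_box I a u \<longleftrightarrow> (\<forall>i. a i * pdeg I i \<le> u i \<and> u i \<le> (a i + 1) * pdeg I i)"

definition good :: "('n::finite) monomial set \<Rightarrow> bool" where
  "good I \<longleftrightarrow> (\<forall>l::nat. l \<ge> 1 \<longrightarrow> (\<forall>u \<in> mingens (mon_pow I l).
      \<exists>a. (\<Sum>i\<in>UNIV. a i) = l - 1 \<and> in_box I a u))"

end

theory Submission
  imports Defs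
begin

text \<open>Let \<open>d\<^sub>i = pdeg I i\<close>. The box index of a monomial u can always be
  raised to \<open>\<lfloor>u\<^sub>i / d\<^sub>i\<rfloor>\<close>, and passing to a divisor only lowers it, so the
  conditions on all of \<open>I\<^sup>l\<close>, on its minimal generators and on products of
  minimal generators of I are all equivalent to "some box of level at least
  \<open>l - 1\<close>". A box of level exactly \<open>l - 1\<close> is needed only for minimal
  generators u of \<open>I\<^sup>l\<close>: if u lies in a box of level at least l, then u is
  divisible by a product \<open>\<Prod> x\<^sub>i\<^bsup>c\<^sub>i d\<^sub>i\<^esup>\<close> of l pure powers, so by minimality
  u equals it, and lowering one nonzero \<open>c\<^sub>i\<close> by one gives a box of level \<open>l - 1\<close>
  containing u.\<close>

lemma ex_mingens_le:
  fixes S :: "('n::finite) monomial set"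
  assumes "u \<in> S"
  shows "\<exists>g \<in> mingens S. g \<le> u"
  using assms
proof (induction "\<Sum>i\<in>UNIV. u i" arbitrary: u rule: less_induct)
  case less
  show ?case
  proof (cases "u \<in> mingens S")
    case False
    then obtain v where v: "v \<in> S" "v \<le> u" "v \<noteq> u"
      using less.prems unfolding mingens_def by auto
    then obtain j where "v j < u j"
      by (metis antisym le_funD le_funI not_le)
    with v(2) have "(\<Sum>i\<in>UNIV. v i) < (\<Sum>i\<in>UNIV. u i)"
      by (intro sum_strict_mono_ex1) (auto simp: le_fun_def)
    with less.hyps v(1) obtain g where "g \<in> mingens S" "g \<le> v" by blast
    with v(2) show ?thesis by (meson order_trans)
  qed auto
qed

lemma mingens_subset: "mingens I \<subseteq> I"
  by (auto simp: mingens_def)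

lemma xpow_mingens_unique:
  assumes "xpow i e \<in> mingens I" and "xpow i e' \<in> mingens I"
  shows "e = e'"
proof -
  have minimal: "xpow i x = xpow i y"
    if "xpow i x \<in> I" "xpow i y \<in> mingens I" "x \<le> y" for x y
  proof -
    have "xpow i x \<le> xpow i y"
      using that(3) by (simp add: le_fun_def xpow_def)
    with that(1,2) show ?thesis
      by (simp add: mingens_def)
  qed
  have "xpow i e = xpow i e'"
    using assms mingens_subset[of I] minimal[of e e'] minimal[of e' e] by (cases "e \<le> e'") auto
  then have "xpow i e i = xpow i e' i"
    by simp
  then show ?thesis
    by (simp add: xpow_def)
qed

lemma m_primary_zero_notin:
  assumes "m_primary I"
  shows "(\<lambda>_. 0) \<notin> I"
proof
  assume "(\<lambda>_. 0) \<in> I"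
  then have "(\<lambda>_. 0) \<in> mon_radical I"
    unfolding mon_radical_def by (auto intro: exI[of _ 1])
  with assms show False
    by (simp add: m_primary_def mon_max_def)
qed

lemma m_primary_ex_xpow_mingens:
  fixes I :: "('n::finite) monomial set"
  assumes "m_primary I"
  shows "\<exists>d \<ge> 1. xpow i d \<in> mingens I"
proof -
  have "xpow i 1 \<in> mon_radical I"
    using assms by (auto simp: m_primary_def mon_max_def xpow_def fun_eq_iff)
  then obtain k where "(\<lambda>j. k * xpow i 1 j) \<in> I"
    by (auto simp: mon_radical_def)
  moreover have "(\<lambda>j. k * xpow i 1 j) = xpow i k"
    by (auto simp: xpow_def)
  ultimately obtain g where g: "g \<in> mingens I" "g \<le> xpow i k"
    using ex_mingens_le by metis
  then have g_xpow: "g = xpow i (g i)"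
    by (auto simp: le_fun_def xpow_def fun_eq_iff split: if_splits)
  have "g i \<noteq> 0"
  proof
    assume "g i = 0"
    with g_xpow have "g = (\<lambda>_. 0)"
      by (simp add: xpow_def fun_eq_iff)
    with g(1) mingens_subset m_primary_zero_notin[OF assms] show False
      by blast
  qed
  with g(1) g_xpow show ?thesis
    by (intro exI[of _ "g i"]) simp
qed

lemma m_primary_pdeg:
  fixes I :: "('n::finite) monomial set"
  assumes "m_primary I"
  shows "1 \<le> pdeg I i" and "xpow i (pdeg I i) \<in> mingens I"
proof -
  obtain d where d: "1 \<le> d" "xpow i d \<in> mingens I"
    using m_primary_ex_xpow_mingens[OF assms] by blast
  have "pdeg I i = d"
    unfolding pdeg_def
  proof (rule the_equality)
    show "1 \<le> d \<and> xpow i d \<in> mingens I"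
      using d by simp
    show "e = d" if "1 \<le> e \<and> xpow i e \<in> mingens I" for e
      using that d(2) xpow_mingens_unique[of i e I d] by simp
  qed
  with d show "1 \<le> pdeg I i" and "xpow i (pdeg I i) \<in> mingens I"
    by simp_all
qed

lemma m_primary_pdeg_pos:
  fixes I :: "('n::finite) monomial set"
  assumes "m_primary I"
  shows "0 < pdeg I i"
  using m_primary_pdeg(1)[OF assms, of i] by simp

lemma in_box_div:
  assumes "\<And>i. 0 < pdeg I i"
  shows "in_box I (\<lambda>i. u i div pdeg I i) u"
  unfolding in_box_def
proof
  fix i
  have "u i = u i div pdeg I i * pdeg I i + u i mod pdeg I i"
    by (rule div_mult_mod_eq[symmetric])
  moreover have "u i mod pdeg I i < pdeg I i"
    using assms by simp
  ultimately show "u i div pdeg I i * pdeg I i \<le> u i \<and> u i \<le> (u i div pdeg I i + 1) * pdeg I i"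
    by (simp add: distrib_right)
qed

lemma in_box_le_div:
  assumes "in_box I a v" and "v \<le> u" and "0 < pdeg I i"
  shows "a i \<le> u i div pdeg I i"
proof -
  have "a i * pdeg I i \<le> u i"
    using assms(1,2) by (meson in_box_def le_funD order_trans)
  with assms(3) show ?thesis
    by (simp add: less_eq_div_iff_mult_less_eq)
qed

lemma in_box_le:
  fixes I :: "('n::finite) monomial set"
  assumes "\<And>i. 0 < pdeg I i" and "in_box I a v" and "v \<le> u"
  shows "\<exists>b. in_box I b u \<and> (\<Sum>i\<in>UNIV. a i) \<le> (\<Sum>i\<in>UNIV. b i)"
  using in_box_div[OF assms(1)] in_box_le_div[OF assms(2,3)] assms(1)
  by (blast intro: sum_mono)

lemma in_box_scaled_pred:
  assumes "1 \<le> c i"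
  shows "in_box I (c(i := c i - 1)) (\<lambda>j. c j * pdeg I j)"
proof -
  from assms obtain k where "c i = Suc k"
    by (cases "c i") auto
  then show ?thesis
    by (auto simp: in_box_def)
qed

lemma mprod_Cons: "mprod (m # ms) = (\<lambda>i. m i + mprod ms i)"
  by (simp add: mprod_def fun_eq_iff)

lemma mprod_in_mon_pow:
  assumes "set ms \<subseteq> I"
  shows "mprod ms \<in> mon_pow I (length ms)"
  using assms by (auto simp: mon_pow_def)

lemma mon_pow_Cons:
  assumes "v \<in> mon_pow I l" and "w \<in> I"
  shows "(\<lambda>i. w i + v i) \<in> mon_pow I (Suc l)"
proof -
  obtain ms where ms: "length ms = l" "set ms \<subseteq> I" "mprod ms \<le> v"
    using assms(1) by (auto simp: mon_pow_def)
  then have "mprod (w # ms) \<le> (\<lambda>i. w i + v i)"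
    by (simp add: mprod_Cons le_fun_def)
  with ms assms(2) show ?thesis
    unfolding mon_pow_def by (intro CollectI exI[of _ "w # ms"]) auto
qed

lemma ex_mingens_list_le:
  fixes I :: "('n::finite) monomial set"
  assumes "set ms \<subseteq> I"
  shows "\<exists>gs. length gs = length ms \<and> set gs \<subseteq> mingens I \<and> mprod gs \<le> mprod ms"
  using assms
proof (induction ms)
  case (Cons m ms)
  then obtain gs where gs: "length gs = length ms" "set gs \<subseteq> mingens I" "mprod gs \<le> mprod ms"
    by auto
  obtain g where g: "g \<in> mingens I" "g \<le> m"
    using ex_mingens_le Cons.prems by (metis list.set_intros(1) subsetD)
  have "mprod (g # gs) \<le> mprod (m # ms)"
    using g(2) gs(3) by (simp add: mprod_Cons le_fun_def add_mono)
  with gs g show ?case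
    by (intro exI[of _ "g # gs"]) auto
qed simp

lemma mon_pow_mingens_list:
  fixes I :: "('n::finite) monomial set"
  assumes "u \<in> mon_pow I l"
  shows "\<exists>gs. length gs = l \<and> set gs \<subseteq> mingens I \<and> mprod gs \<le> u"
proof -
  obtain ms where "length ms = l" "set ms \<subseteq> I" "mprod ms \<le> u"
    using assms by (auto simp: mon_pow_def)
  then show ?thesis
    using ex_mingens_list_le by (metis order_trans)
qed

lemma sum_UNIV_fun_upd_Suc:
  fixes c :: "('n::finite) \<Rightarrow> nat"
  shows "(\<Sum>j\<in>UNIV. (c(i := Suc (c i))) j) = Suc (\<Sum>j\<in>UNIV. c j)"
proof -
  have "c(i := Suc (c i)) = (\<lambda>j. c j + (if j = i then 1 else 0))"
    by auto
  then show ?thesis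
    by (simp add: sum.distrib)
qed

lemma ex_le_sum_eq:
  fixes a :: "('n::finite) \<Rightarrow> nat"
  assumes "l \<le> (\<Sum>i\<in>UNIV. a i)"
  shows "\<exists>c \<le> a. (\<Sum>i\<in>UNIV. c i) = l"
  using assms
proof (induction l)
  case 0
  show ?case
    by (intro exI[of _ "\<lambda>_. 0"]) (simp add: le_fun_def)
next
  case (Suc l)
  then obtain c where c: "c \<le> a" "(\<Sum>i\<in>UNIV. c i) = l"
    by auto
  have "\<not> (\<forall>i. a i \<le> c i)"
  proof
    assume "\<forall>i. a i \<le> c i"
    then have "(\<Sum>i\<in>UNIV. a i) \<le> l"
      using c(2) sum_mono[of UNIV a c] by simp
    with Suc.prems show False
      by simp
  qed
  then obtain i where "c i < a i"
    by (auto simp: not_le)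
  with c(1) have "c(i := Suc (c i)) \<le> a"
    by (auto simp: le_fun_def)
  moreover have "(\<Sum>j\<in>UNIV. (c(i := Suc (c i))) j) = Suc l"
    by (simp only: sum_UNIV_fun_upd_Suc c(2))
  ultimately show ?case
    by blast
qed

lemma scaled_xpow_in_mon_pow:
  fixes c :: "('n::finite) \<Rightarrow> nat"
  assumes "\<And>i. xpow i (d i) \<in> I"
  shows "(\<lambda>j. c j * d j) \<in> mon_pow I (\<Sum>i\<in>UNIV. c i)"
proof (induction "\<Sum>i\<in>UNIV. c i" arbitrary: c)
  case 0
  then show ?case
    by (auto simp: mon_pow_def mprod_def)
next
  case (Suc l)
  then obtain i where "c i \<noteq> 0"
    by (metis (no_types) sum.neutral nat.distinct(1))
  define c' where "c' = c(i := c i - 1)"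
  have c: "c = c'(i := Suc (c' i))"
    using \<open>c i \<noteq> 0\<close> by (auto simp: c'_def)
  have "Suc (\<Sum>i\<in>UNIV. c' i) = (\<Sum>i\<in>UNIV. c i)"
    by (subst c) (rule sum_UNIV_fun_upd_Suc[symmetric])
  with Suc.hyps(2) have "(\<Sum>i\<in>UNIV. c' i) = l"
    by simp
  with Suc.hyps(1) have "(\<lambda>j. c' j * d j) \<in> mon_pow I l"
    by blast
  from mon_pow_Cons[OF this assms] Suc.hyps(2)
  have "(\<lambda>j. xpow i (d i) j + c' j * d j) \<in> mon_pow I (\<Sum>i\<in>UNIV. c i)"
    by simp
  also have "(\<lambda>j. xpow i (d i) j + c' j * d j) = (\<lambda>j. c j * d j)"
    by (subst c) (auto simp: xpow_def fun_eq_iff)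
  finally show ?case .
qed

lemma mingens_mon_pow_in_box_exact:
  fixes I :: "('n::finite) monomial set"
  assumes I: "m_primary I"
    and u: "u \<in> mingens (mon_pow I l)" "in_box I a u"
    and l: "1 \<le> l" "l \<le> (\<Sum>i\<in>UNIV. a i)"
  shows "\<exists>a'. (\<Sum>i\<in>UNIV. a' i) = l - 1 \<and> in_box I a' u"
proof -
  obtain c where c: "c \<le> a" "(\<Sum>i\<in>UNIV. c i) = l"
    using ex_le_sum_eq[OF l(2)] by blast
  have "(\<lambda>j. c j * pdeg I j) \<in> mon_pow I l"
    using scaled_xpow_in_mon_pow m_primary_pdeg(2)[OF I] mingens_subset c(2) by blast
  moreover have "(\<lambda>j. c j * pdeg I j) \<le> u"
  proof (rule le_funI)
    fix j
    have "c j * pdeg I j \<le> a j * pdeg I j"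
      using c(1) by (simp add: le_fun_def)
    also have "\<dots> \<le> u j"
      using u(2) by (simp add: in_box_def)
    finally show "c j * pdeg I j \<le> u j" .
  qed
  ultimately have u_eq: "u = (\<lambda>j. c j * pdeg I j)"
    using u(1) unfolding mingens_def by blast
  obtain i where i: "1 \<le> c i"
    using c(2) l(1) by (metis sum.neutral not_one_le_zero less_one not_le)
  define c' where "c' = c(i := c i - 1)"
  have "c = c'(i := Suc (c' i))"
    using i by (auto simp: c'_def)
  with c(2) have "(\<Sum>j\<in>UNIV. c' j) = l - 1"
    by (metis diff_Suc_1 sum_UNIV_fun_upd_Suc)
  with in_box_scaled_pred[of c i I, OF i] u_eq show ?thesis
    unfolding c'_def by blast
qed

lemma good_imp_in_box_mon_pow:
  fixes I :: "('n::finite) monomial set"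
  assumes I: "m_primary I" and "good I" and "1 \<le> l" and "u \<in> mon_pow I l"
  shows "\<exists>a. in_box I a u \<and> l - 1 \<le> (\<Sum>i\<in>UNIV. a i)"
proof -
  obtain g where g: "g \<in> mingens (mon_pow I l)" "g \<le> u"
    using ex_mingens_le assms(4) by blast
  then obtain a where "(\<Sum>i\<in>UNIV. a i) = l - 1" "in_box I a g"
    using assms(2,3) unfolding good_def by blast
  with in_box_le[OF m_primary_pdeg_pos[OF I] _ g(2)] show ?thesis
    by fastforce
qed

lemma in_box_mon_pow_imp_good:
  fixes I :: "('n::finite) monomial set"
  assumes I: "m_primary I"
    and box: "\<And>l u. 1 \<le> l \<Longrightarrow> u \<in> mon_pow I l \<Longrightarrow> \<exists>a. in_box I a u \<and> l - 1 \<le> (\<Sum>i\<in>UNIV. a i)"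
  shows "good I"
  unfolding good_def
proof (intro allI impI ballI)
  fix l :: nat and u
  assume l: "1 \<le> l" and u: "u \<in> mingens (mon_pow I l)"
  then obtain a where a: "in_box I a u" "l - 1 \<le> (\<Sum>i\<in>UNIV. a i)"
    using box mingens_subset by blast
  show "\<exists>a. (\<Sum>i\<in>UNIV. a i) = l - 1 \<and> in_box I a u"
  proof (cases "(\<Sum>i\<in>UNIV. a i) = l - 1")
    case False
    with a(2) have "l \<le> (\<Sum>i\<in>UNIV. a i)"
      by simp
    with mingens_mon_pow_in_box_exact[OF I u a(1) l] show ?thesis .
  qed (use a in blast)
qed

lemma in_box_mingens_prods_imp_in_box_mon_pow:
  fixes I :: "('n::finite) monomial set"
  assumes I: "m_primary I"
    and box: "\<And>gs. 1 \<le> length gs \<Longrightarrow> set gs \<subseteq> mingens I \<Longrightarrow>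
                 \<exists>a. in_box I a (mprod gs) \<and> length gs - 1 \<le> (\<Sum>i\<in>UNIV. a i)"
    and "1 \<le> l" and u: "u \<in> mon_pow I l"
  shows "\<exists>a. in_box I a u \<and> l - 1 \<le> (\<Sum>i\<in>UNIV. a i)"
proof -
  obtain gs where gs: "length gs = l" "set gs \<subseteq> mingens I" "mprod gs \<le> u"
    using mon_pow_mingens_list[OF u] by blast
  with box \<open>1 \<le> l\<close> obtain a where "in_box I a (mprod gs)" "l - 1 \<le> (\<Sum>i\<in>UNIV. a i)"
    by blast
  with in_box_le[OF m_primary_pdeg_pos[OF I] _ gs(3)] show ?thesis
    by fastforce
qed

theorem mainTheorem1:
  fixes I :: "('n::finite) monomial set"
  assumes "m_primary I"
  shows "(good I \<longleftrightarrow>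
           (\<forall>l::nat. l \<ge> 1 \<longrightarrow> (\<forall>u \<in> mon_pow I l.
              \<exists>a. in_box I a u \<and> (\<Sum>i\<in>UNIV. a i) \<ge> l - 1)))
       \<and> (good I \<longleftrightarrow>
           (\<forall>l::nat. l \<ge> 1 \<longrightarrow> (\<forall>ms. length ms = l \<and> set ms \<subseteq> mingens I \<longrightarrow>
              (\<exists>a. in_box I a (mprod ms) \<and> (\<Sum>i\<in>UNIV. a i) \<ge> l - 1))))"
  (is "(good I \<longleftrightarrow> ?P2) \<and> (good I \<longleftrightarrow> ?P3)")
proof -
  have "good I \<longleftrightarrow> ?P2"
  proof
    show ?P2 if "good I"
      using good_imp_in_box_mon_pow[OF assms that] by blast
    show "good I" if ?P2
      using in_box_mon_pow_imp_good[OF assms] that by blast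
  qed
  moreover have "?P3" if P2: ?P2
  proof (intro allI impI)
    fix l :: nat and gs
    assume "1 \<le> l" and "length gs = l \<and> set gs \<subseteq> mingens I"
    then have "mprod gs \<in> mon_pow I l"
      using mprod_in_mon_pow[of gs I] mingens_subset[of I] by auto
    with P2 \<open>1 \<le> l\<close> show "\<exists>a. in_box I a (mprod gs) \<and> l - 1 \<le> (\<Sum>i\<in>UNIV. a i)"
      by blast
  qed
  moreover have ?P2 if P3: ?P3
  proof (intro allI impI ballI)
    fix l :: nat and u
    assume "1 \<le> l" and "u \<in> mon_pow I l"
    then show "\<exists>a. in_box I a u \<and> l - 1 \<le> (\<Sum>i\<in>UNIV. a i)"
      by (rule in_box_mingens_prods_imp_in_box_mon_pow[OF assms, rotated]) (use P3 in blast)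
  qed
  ultimately show ?thesis
    by blast
qed

end
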